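(* Let $k\ge 2$, $n\ge1$, and let $L_n$ and $\varphi:L_n\to E^{n-1}$ be as in the context. Then $\varphi$ is surjective.
   Context: $E=\{0,\dots,k-1\}$. For $\mathbf a\in E^n$, $w(\mathbf a)=a_1+\dots+a_n$, and $\mathcal B_t=\{\mathbf a\in E^n: w(\mathbf a)=t\}$. Let $g=\lfloor n(k-1)/2\rfloor$ and $C_i=\{\mathbf a\in E^n: a_1=i\}$. Define $L_n=(\mathcal B_0\cup\dots\cup\mathcal B_g)\cap(C_0\cup C_{k-1})$ if $n(k-1)$ is odd, and $L_n=((\mathcal B_0\cup\dots\cup\mathcal B_{g-1})\cap(C_0\cup C_{k-1}))\cup(\mathcal B_g\cap C_0)$ if $n(k-1)$ is even. For $a\in E$ let $\overline a=k-1-a$. Define $\varphi(a_1,\dots,a_n)=(a_2,\dots,a_n)$ if $a_1=0$ and $\varphi(a_1,\dots,a_n)=(\overline{a}_2,\dots,\overline{a}_n)$ if $a_1=k-1$. *)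

theory Defs
  imports Main
begin

text \<open>Vectors in E^n, E = {0,...,k-1}, are lists of length n; the coordinate a_1 is a ! 0.\<close>

definition Evec :: "nat \<Rightarrow> nat \<Rightarrow> nat list set" where
  "Evec k n = {a. length a = n \<and> (\<forall>x\<in>set a. x < k)}"

definition wt :: "nat list \<Rightarrow> nat" where
  "wt a = sum_list a"

definition Blev :: "nat \<Rightarrow> nat \<Rightarrow> nat \<Rightarrow> nat list set" where
  "Blev k n t = {a \<in> Evec k n. wt a = t}"

definition Cfst :: "nat \<Rightarrow> nat \<Rightarrow> nat \<Rightarrow> nat list set" where
  "Cfst k n i = {a \<in> Evec k n. a ! 0 = i}"

definition gmid :: "nat \<Rightarrow> nat \<Rightarrow> nat" where
  "gmid k n = (n * (k - 1)) div 2"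

definition Lset :: "nat \<Rightarrow> nat \<Rightarrow> nat list set" where
  "Lset k n =
    (if odd (n * (k - 1))
     then (\<Union>t\<in>{0..gmid k n}. Blev k n t) \<inter> (Cfst k n 0 \<union> Cfst k n (k - 1))
     else ((\<Union>t\<in>{0..<gmid k n}. Blev k n t) \<inter> (Cfst k n 0 \<union> Cfst k n (k - 1)))
          \<union> (Blev k n (gmid k n) \<inter> Cfst k n 0))"

definition cbar :: "nat \<Rightarrow> nat \<Rightarrow> nat" where
  "cbar k a = k - 1 - a"

definition phi :: "nat \<Rightarrow> nat list \<Rightarrow> nat list" where
  "phi k a = (if a ! 0 = 0 then tl a
              else if a ! 0 = k - 1 then map (cbar k) (tl a)
              else undefined)"

end

theory Submission
  imports Defs
begin

text \<open>A vector b of length n - 1 is the image of both 0 # b and (k-1) # map (cbar k) b. The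
  weights of these two preimages add up to n(k-1), so one of them lies at or below the middle
  level g = n(k-1) div 2. If the first does not, the second lies strictly below g unless n(k-1)
  is odd, and in that case level g is admissible for both first coordinates.\<close>

lemma map_cbar_in_Evec: "b \<in> Evec k m \<Longrightarrow> map (cbar k) b \<in> Evec k m"
  by (auto simp: Evec_def cbar_def)

lemma map_cbar_involutive: "b \<in> Evec k m \<Longrightarrow> map (cbar k) (map (cbar k) b) = b"
  by (induction b arbitrary: m) (auto simp: Evec_def cbar_def)

lemma wt_map_cbar_add: "b \<in> Evec k m \<Longrightarrow> wt (map (cbar k) b) + wt b = m * (k - 1)"
  by (induction b arbitrary: m) (auto simp: Evec_def cbar_def wt_def)

lemma Lset_elim:
  assumes "a \<in> Lset k n"
  shows "a \<in> Evec k n" and "a ! 0 = 0 \<or> a ! 0 = k - 1"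
  using assms by (auto simp: Lset_def Blev_def Cfst_def split: if_splits)

lemma Lset_intro:
  assumes "a \<in> Evec k n" and "a ! 0 = 0 \<or> a ! 0 = k - 1"
    and "wt a < gmid k n \<or> (wt a = gmid k n \<and> (odd (n * (k - 1)) \<or> a ! 0 = 0))"
  shows "a \<in> Lset k n"
  using assms by (auto simp: Lset_def Blev_def Cfst_def)

lemma diff_below_half:
  fixes s N :: nat
  assumes "s \<le> N" and "N div 2 < s"
  shows "N - s < N div 2 \<or> (N - s = N div 2 \<and> odd N)"
  using assms by presburger

lemma phi_in_Evec:
  assumes "a \<in> Lset k n"
  shows "phi k a \<in> Evec k (n - 1)"
proof -
  have a: "a \<in> Evec k n" and a0: "a ! 0 = 0 \<or> a ! 0 = k - 1"
    using Lset_elim[OF assms] by auto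
  then have "tl a \<in> Evec k (n - 1)"
    by (cases a) (auto simp: Evec_def)
  then show ?thesis
    using a0 map_cbar_in_Evec by (auto simp: phi_def)
qed

lemma Evec_subset_phi_image:
  assumes "k \<ge> 2" and "n \<ge> 1"
  shows "Evec k (n - 1) \<subseteq> phi k ` Lset k n"
proof
  fix b assume b: "b \<in> Evec k (n - 1)"
  have n_split: "n * (k - 1) = (n - 1) * (k - 1) + (k - 1)"
    using assms(2) by (cases n) auto
  show "b \<in> phi k ` Lset k n"
  proof (cases "wt b \<le> gmid k n")
    case True
    have "0 # b \<in> Evec k n"
      using b assms by (auto simp: Evec_def)
    then have "0 # b \<in> Lset k n"
      using True by (intro Lset_intro) (auto simp: wt_def)
    moreover have "phi k (0 # b) = b" by (simp add: phi_def)
    ultimately show ?thesis by (metis image_eqI)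
  next
    case False
    let ?a = "(k - 1) # map (cbar k) b"
    have a: "?a \<in> Evec k n"
      using map_cbar_in_Evec[OF b] assms by (auto simp: Evec_def)
    have "wt ?a = (k - 1) + wt (map (cbar k) b)"
      by (simp add: wt_def)
    then have "wt ?a = n * (k - 1) - wt b" and "wt b \<le> n * (k - 1)"
      using wt_map_cbar_add[OF b] n_split by linarith+
    then have "wt ?a < gmid k n \<or> (wt ?a = gmid k n \<and> odd (n * (k - 1)))"
      using diff_below_half[of "wt b" "n * (k - 1)"] False
      unfolding gmid_def by (simp only:)
    then have "?a \<in> Lset k n"
      using a by (intro Lset_intro) auto
    moreover have "phi k ?a = b"
      using assms(1) map_cbar_involutive[OF b] by (simp add: phi_def)
    ultimately show ?thesis by (metis image_eqI)
  qed
qed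

theorem lemma3:
  fixes k n :: nat
  assumes "k \<ge> 2" and "n \<ge> 1"
  shows "phi k ` Lset k n = Evec k (n - 1)"
  using phi_in_Evec Evec_subset_phi_image[OF assms] by blast

end
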